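(* Let $m$ be a positive integer. If $D$ is a quaternary near-extremal Hermitian self-dual code of length $6m$, then $A_{2i}(D) \equiv 0 \pmod 9$ for every $i = m, m+1, \ldots, 3m$, where $A_{j}(D)$ denotes the number of codewords of weight $j$ in $D$.
   Context: Let $\mathbb{F}_4=\{0,1,\omega,\omega^2\}$ with $\omega^2=\omega+1$. A quaternary code of length $n$ is a linear subspace of $\mathbb{F}_4^n$. The Hermitian inner product is $\langle x,y\rangle_H=\sum_{k=1}^n x_k y_k^2$, the Hermitian dual of $D$ is $D^{\perp_H}=\{x\in\mathbb{F}_4^n : \langle x,y\rangle_H=0 \text{ for all } y\in D\}$, and $D$ is Hermitian self-dual if $D=D^{\perp_H}$. The weight of a vector is the number of its nonzero coordinates, and the minimum weight is the smallest weight of a nonzero codeword. A quaternary Hermitian self-dual code of length $n$ is called near-extremal if its minimum weight equals $2\lfloor n/6\rfloor$; thus for length $6m$ the minimum weight is $2m$. *)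

theory Defs
  imports Main
begin

datatype f4 = Z4 | O4 | W4 | V4  (* V4 stands for w^2 *)

instantiation f4 :: field
begin

definition zero_f4 :: f4 where "zero_f4 = Z4"
definition one_f4 :: f4 where "one_f4 = O4"

fun plus_f4 :: "f4 \<Rightarrow> f4 \<Rightarrow> f4" where
  "plus_f4 Z4 y = y"
| "plus_f4 x Z4 = x"
| "plus_f4 O4 O4 = Z4" | "plus_f4 O4 W4 = V4" | "plus_f4 O4 V4 = W4"
| "plus_f4 W4 O4 = V4" | "plus_f4 W4 W4 = Z4" | "plus_f4 W4 V4 = O4"
| "plus_f4 V4 O4 = W4" | "plus_f4 V4 W4 = O4" | "plus_f4 V4 V4 = Z4"

definition uminus_f4 :: "f4 \<Rightarrow> f4" where "uminus_f4 x = x"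
definition minus_f4 :: "f4 \<Rightarrow> f4 \<Rightarrow> f4" where "minus_f4 x y = x + y"

fun times_f4 :: "f4 \<Rightarrow> f4 \<Rightarrow> f4" where
  "times_f4 Z4 y = Z4"
| "times_f4 x Z4 = Z4"
| "times_f4 O4 y = y"
| "times_f4 x O4 = x"
| "times_f4 W4 W4 = V4" | "times_f4 W4 V4 = O4"
| "times_f4 V4 W4 = O4" | "times_f4 V4 V4 = W4"

fun inverse_f4 :: "f4 \<Rightarrow> f4" where
  "inverse_f4 Z4 = Z4" | "inverse_f4 O4 = O4"
| "inverse_f4 W4 = V4" | "inverse_f4 V4 = W4"

definition divide_f4 :: "f4 \<Rightarrow> f4 \<Rightarrow> f4" where "divide_f4 x y = x * inverse y"

instance
proof (standard, goal_cases)
  case (1 a b c) then show ?case by (cases a; cases b; cases c) (simp_all add: zero_f4_def one_f4_def uminus_f4_def minus_f4_def divide_f4_def)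
next case (2 a b) then show ?case by (cases a; cases b) (simp_all add: zero_f4_def one_f4_def uminus_f4_def minus_f4_def divide_f4_def)
next case (3 a) then show ?case by (cases a) (simp_all add: zero_f4_def one_f4_def uminus_f4_def minus_f4_def divide_f4_def)
next case (4 a b c) then show ?case by (cases a; cases b; cases c) (simp_all add: zero_f4_def one_f4_def uminus_f4_def minus_f4_def divide_f4_def)
next case (5 a b) then show ?case by (cases a; cases b) (simp_all add: zero_f4_def one_f4_def uminus_f4_def minus_f4_def divide_f4_def)
next case (6 a) then show ?case by (cases a) (simp_all add: zero_f4_def one_f4_def uminus_f4_def minus_f4_def divide_f4_def)
next case (7 a) then show ?case by (cases a) (simp_all add: zero_f4_def one_f4_def uminus_f4_def minus_f4_def divide_f4_def)
next case (8 a b) then show ?case by (cases a; cases b) (simp_all add: zero_f4_def one_f4_def uminus_f4_def minus_f4_def divide_f4_def)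
next case (9 a b c) then show ?case by (cases a; cases b; cases c) (simp_all add: zero_f4_def one_f4_def uminus_f4_def minus_f4_def divide_f4_def)
next case 10 then show ?case by (simp_all add: zero_f4_def one_f4_def uminus_f4_def minus_f4_def divide_f4_def)
next case (11 a) then show ?case by (cases a) (simp_all add: zero_f4_def one_f4_def uminus_f4_def minus_f4_def divide_f4_def)
next case (12 a b) then show ?case by (cases a; cases b) (simp_all add: zero_f4_def one_f4_def uminus_f4_def minus_f4_def divide_f4_def)
next case 13 then show ?case by (simp_all add: zero_f4_def one_f4_def uminus_f4_def minus_f4_def divide_f4_def)
qed

end

definition omega :: f4 where "omega = W4"

lemma omega_sq: "omega ^ 2 = omega + 1"
  by (simp add: omega_def one_f4_def power2_eq_square)

definition vec_space :: "nat \<Rightarrow> f4 list set" where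
  "vec_space n = {x. length x = n}"

definition vadd :: "f4 list \<Rightarrow> f4 list \<Rightarrow> f4 list" where
  "vadd x y = map2 (+) x y"

definition vscale :: "f4 \<Rightarrow> f4 list \<Rightarrow> f4 list" where
  "vscale c x = map (\<lambda>a. c * a) x"

definition quaternary_code :: "nat \<Rightarrow> f4 list set \<Rightarrow> bool" where
  "quaternary_code n D \<longleftrightarrow> D \<subseteq> vec_space n \<and> replicate n 0 \<in> D \<and>
     (\<forall>x\<in>D. \<forall>y\<in>D. vadd x y \<in> D) \<and> (\<forall>c. \<forall>x\<in>D. vscale c x \<in> D)"

definition herm_ip :: "f4 list \<Rightarrow> f4 list \<Rightarrow> f4" where
  "herm_ip x y = (\<Sum>k<length x. x ! k * (y ! k) ^ 2)"

definition herm_dual :: "nat \<Rightarrow> f4 list set \<Rightarrow> f4 list set" where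
  "herm_dual n D = {x \<in> vec_space n. \<forall>y\<in>D. herm_ip x y = 0}"

definition herm_self_dual :: "nat \<Rightarrow> f4 list set \<Rightarrow> bool" where
  "herm_self_dual n D \<longleftrightarrow> quaternary_code n D \<and> D = herm_dual n D"

definition wt :: "f4 list \<Rightarrow> nat" where
  "wt x = card {k. k < length x \<and> x ! k \<noteq> 0}"

definition min_weight :: "nat \<Rightarrow> f4 list set \<Rightarrow> nat" where
  "min_weight n D = Min {wt x | x. x \<in> D \<and> x \<noteq> replicate n 0}"

definition near_extremal :: "nat \<Rightarrow> f4 list set \<Rightarrow> bool" where
  "near_extremal n D \<longleftrightarrow> herm_self_dual n D \<and> min_weight n D = 2 * (n div 6)"

definition A_count :: "f4 list set \<Rightarrow> nat \<Rightarrow> nat" where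
  "A_count D j = card {x \<in> D. wt x = j}"

end

theory Submission
  imports Defs "Berlekamp_Zassenhaus.Finite_Field"
begin

(* Fix the first coordinate and split the nonzero codewords of D according to whether they vanish
   there; let W0 and W1 be the generating polynomials of the weights of these two classes outside
   the first coordinate, so that the nonzero weight enumerator of D is W0 + x W1.  Multiplication
   by omega acts freely on both classes, hence W0 = 3 R and W1 = 3 S.  Poisson summation with the
   additive character (-1)^Tr of F4 gives a MacWilliams identity linking |D| (1 + W0 + W1) with W0;
   reduced modulo 9, using |D| = 64^m = 1 (mod 9), it becomes R + S = 1 - x + R(1 - x) over F3.
   As all weights are even, R is even and S is odd, which makes P = R + x S invariant under
   x -> x + 1.  Minimum weight 2m means that x^(2m) divides P, so P has roots of multiplicity 2m
   at 0, 1 and 2, more than its degree (< 6m) allows.  Thus P = 0 over F3, i.e. 3 divides every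
   coefficient of P, and A_w(D) = 3 P_w is divisible by 9. *)

section \<open>The field F4 and its trace character\<close>

lemma UNIV_f4: "(UNIV :: f4 set) = {Z4, O4, W4, V4}"
  using f4.exhaust by auto

instance f4 :: finite
  by standard (simp add: UNIV_f4)

lemmas f4_consts = zero_f4_def one_f4_def omega_def

lemma of_nat_f4: "(of_nat k :: f4) = (if even k then 0 else 1)"
  by (induction k) (auto simp: f4_consts)

lemma f4_add_self [simp]: "a + a = (0::f4)"
  by (cases a) (simp_all add: f4_consts)

lemma f4_square_add: "(a + b)^2 = a^2 + (b::f4)^2"
  by (cases a; cases b) (simp_all add: power2_eq_square)

lemma f4_mult_square: "a * a^2 = (if a = 0 then 0 else (1::f4))"
  by (cases a) (simp_all add: power2_eq_square f4_consts)

(* (-1)^Tr(a) for the absolute trace Tr a = a + a^2 : F4 \<rightarrow> F2 *)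
definition trace_char :: "f4 \<Rightarrow> int" where
  "trace_char a = (if a = 0 \<or> a = 1 then 1 else -1)"

lemma trace_char_add: "trace_char (a + b) = trace_char a * trace_char b"
  by (cases a; cases b) (simp_all add: trace_char_def f4_consts)

lemma trace_char_sum: "trace_char (\<Sum>k\<in>A. f k) = (\<Prod>k\<in>A. trace_char (f k))"
  by (induction A rule: infinite_finite_induct) (simp_all add: trace_char_add, simp_all add: trace_char_def)

lemma trace_char_scaled: "a \<noteq> 0 \<Longrightarrow> \<exists>s. trace_char (s^2 * a) = -1"
  by (cases a) (auto simp: trace_char_def power2_eq_square f4_consts intro: exI[of _ W4] exI[of _ O4])

lemma sum_trace_char_weighted:
  "(\<Sum>a\<in>UNIV. of_int (trace_char (a * b^2)) * (if a = 0 then y else x)) =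
     (if b = 0 then y + 3 * x else (y - x :: 'a::comm_ring_1))"
  by (cases b) (simp_all add: UNIV_f4 trace_char_def power2_eq_square f4_consts algebra_simps)

lemma sum_trace_char_f4: "(\<Sum>a\<in>UNIV. trace_char (a * b^2)) = (if b = 0 then 4 else 0)"
  by (cases b) (simp_all add: UNIV_f4 trace_char_def power2_eq_square f4_consts)

section \<open>Vectors and the Hermitian form\<close>

lemma length_vadd [simp]: "length (vadd x y) = min (length x) (length y)"
  by (simp add: vadd_def)

lemma nth_vadd [simp]: "k < length x \<Longrightarrow> k < length y \<Longrightarrow> vadd x y ! k = x ! k + y ! k"
  by (simp add: vadd_def)

lemma length_vscale [simp]: "length (vscale s x) = length x"
  by (simp add: vscale_def)

lemma nth_vscale [simp]: "k < length x \<Longrightarrow> vscale s x ! k = s * x ! k"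
  by (simp add: vscale_def)

lemma vscale_vscale [simp]: "vscale s (vscale t x) = vscale (s * t) x"
  by (simp add: vscale_def mult.assoc)

lemma vadd_vadd_cancel: "length x = length y \<Longrightarrow> vadd (vadd x y) y = x"
  by (rule nth_equalityI) (simp_all add: add.assoc)

lemma vscale_one [simp]: "vscale 1 x = x"
  by (simp add: vscale_def)

lemma omega_cube [simp]: "omega * (omega * omega) = 1"
  by (simp add: f4_consts)

lemma vscale_omega_neq: "x \<noteq> replicate (length x) 0 \<Longrightarrow> vscale omega x \<noteq> x"
proof
  assume "x \<noteq> replicate (length x) 0" "vscale omega x = x"
  then obtain k where k: "k < length x" "x ! k \<noteq> 0" "omega * x ! k = x ! k"
    by (metis in_set_conv_nth nth_vscale replicate_eqI)
  then show False by (cases "x ! k") (simp_all add: f4_consts)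
qed

lemma vscale_eq_replicate_0_iff:
  "s \<noteq> 0 \<Longrightarrow> vscale s x = replicate (length x) 0 \<longleftrightarrow> x = replicate (length x) 0"
  by (auto simp: list_eq_iff_nth_eq)

lemma herm_ip_vadd_right:
  "length x = length u \<Longrightarrow> length y = length u \<Longrightarrow>
     herm_ip u (vadd x y) = herm_ip u x + herm_ip u y"
  by (simp add: herm_ip_def f4_square_add distrib_left sum.distrib)

lemma herm_ip_vscale_right: "length x = length u \<Longrightarrow> herm_ip u (vscale s x) = s^2 * herm_ip u x"
  by (simp add: herm_ip_def power_mult_distrib sum_distrib_left ac_simps)

lemma herm_ip_self: "herm_ip x x = of_nat (wt x)"
proof -
  have "herm_ip x x = (\<Sum>k<length x. of_bool (x ! k \<noteq> 0))"
    unfolding herm_ip_def by (rule sum.cong) (simp_all add: f4_mult_square)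
  also have "\<dots> = of_nat (wt x)"
    by (simp add: sum.inter_filter[symmetric] wt_def lessThan_def Collect_conj_eq)
  finally show ?thesis .
qed

lemma finite_vec_space: "finite (vec_space n)"
  using finite_lists_length_eq[of "UNIV :: f4 set" n] by (simp add: vec_space_def)

lemma sum_trace_char_herm_ip:
  assumes K: "quaternary_code n K" and u: "length u = n"
  shows "(\<Sum>c\<in>K. trace_char (herm_ip u c)) =
           (if \<forall>c\<in>K. herm_ip u c = 0 then int (card K) else 0)"
proof (cases "\<forall>c\<in>K. herm_ip u c = 0")
  case True
  then show ?thesis by (simp add: trace_char_def)
next
  case False
  have len: "length c = n" if "c \<in> K" for c
    using K that by (auto simp: quaternary_code_def vec_space_def)
  have add: "vadd c d \<in> K" and scale: "vscale s c \<in> K" if "c \<in> K" "d \<in> K" for c d s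
    using K that by (auto simp: quaternary_code_def)
  from False obtain c where c: "c \<in> K" "herm_ip u c \<noteq> 0" by auto
  then obtain s where s: "trace_char (s^2 * herm_ip u c) = -1"
    using trace_char_scaled by blast
  define d where "d = vscale s c"
  have d: "d \<in> K" "length d = n" "trace_char (herm_ip u d) = -1"
    using c s len scale u by (simp_all add: d_def herm_ip_vscale_right)
  text \<open>Translation by \<open>d\<close> permutes \<open>K\<close> and flips the sign of every term.\<close>
  have "(\<Sum>c\<in>K. trace_char (herm_ip u c)) = (\<Sum>c\<in>K. trace_char (herm_ip u (vadd c d)))"
    by (rule sum.reindex_bij_witness[where i = "\<lambda>c. vadd c d" and j = "\<lambda>c. vadd c d"])
       (auto simp: vadd_vadd_cancel len d add)
  also have "\<dots> = (\<Sum>c\<in>K. - trace_char (herm_ip u c))"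
    by (rule sum.cong) (simp_all add: herm_ip_vadd_right len u d trace_char_add)
  finally have "(\<Sum>c\<in>K. trace_char (herm_ip u c)) = 0"
    by (simp add: sum_negf)
  with False show ?thesis by auto
qed

lemma vec_space_Suc: "vec_space (Suc n) = (\<lambda>(a, xs). a # xs) ` (UNIV \<times> vec_space n)"
  by (auto simp: vec_space_def image_iff length_Suc_conv)

lemma sum_vec_space_prod:
  fixes F :: "nat \<Rightarrow> f4 \<Rightarrow> 'a::comm_semiring_1"
  shows "(\<Sum>u\<in>vec_space n. \<Prod>k<n. F k (u ! k)) = (\<Prod>k<n. \<Sum>a\<in>UNIV. F k a)"
proof (induction n arbitrary: F)
  case 0
  then show ?case by (simp add: vec_space_def)
next
  case (Suc n)
  have inj: "inj_on (\<lambda>(a, xs). a # xs) (UNIV \<times> vec_space n)"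
    by (auto simp: inj_on_def)
  have "(\<Sum>u\<in>vec_space (Suc n). \<Prod>k<Suc n. F k (u ! k))
      = (\<Sum>(a, xs)\<in>UNIV \<times> vec_space n. F 0 a * (\<Prod>k<n. F (Suc k) (xs ! k)))"
    unfolding vec_space_Suc sum.reindex[OF inj]
    by (simp only: comp_def case_prod_unfold prod.lessThan_Suc_shift nth_Cons_0 nth_Cons_Suc)
  also have "\<dots> = (\<Sum>a\<in>UNIV. F 0 a) * (\<Sum>xs\<in>vec_space n. \<Prod>k<n. F (Suc k) (xs ! k))"
    by (simp add: sum.cartesian_product[symmetric] sum_product)
  also have "\<dots> = (\<Prod>k<Suc n. \<Sum>a\<in>UNIV. F k a)"
    using Suc.IH[of "\<lambda>k. F (Suc k)"] by (simp only: prod.lessThan_Suc_shift)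
  finally show ?case .
qed

definition punct_wt :: "nat \<Rightarrow> f4 list \<Rightarrow> nat" where
  "punct_wt p c = card {k. k < length c \<and> k \<noteq> p \<and> c ! k \<noteq> 0}"

lemma punct_wt_vscale: "s \<noteq> 0 \<Longrightarrow> punct_wt p (vscale s x) = punct_wt p x"
  unfolding punct_wt_def by (rule arg_cong[where f = card]) auto

lemma wt_eq_punct_wt:
  assumes "p < length c"
  shows "wt c = punct_wt p c + (if c ! p = 0 then 0 else 1)"
proof -
  have "{k. k < length c \<and> c ! k \<noteq> 0} =
      {k. k < length c \<and> k \<noteq> p \<and> c ! k \<noteq> 0} \<union> (if c ! p = 0 then {} else {p})"
    using assms by auto
  then show ?thesis
    unfolding wt_def punct_wt_def by (simp add: card_insert_if)
qed

lemma punct_wt_le: "p < length c \<Longrightarrow> punct_wt p c \<le> length c - 1"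
  unfolding punct_wt_def
  by (rule order.trans[OF card_mono[of "{..<length c} - {p}"]]) auto

lemma prod_punctured:
  assumes "length c = n" "p < n"
  shows "(\<Prod>k\<in>{..<n} - {p}. if c ! k = 0 then a else b) =
           a ^ (n - 1 - punct_wt p c) * (b :: 'a::comm_monoid_mult) ^ punct_wt p c"
proof -
  let ?K = "{..<n} - {p}"
  have nz: "card (?K \<inter> - {k. c ! k = 0}) = punct_wt p c"
    unfolding punct_wt_def using assms by (intro arg_cong[where f = card]) auto
  have "card (?K \<inter> {k. c ! k = 0}) + card (?K \<inter> - {k. c ! k = 0}) = card ?K"
    using card_Int_Diff[OF finite_Diff[OF finite_lessThan], of n "{p}" "{k. c ! k = 0}"]
    by (simp only: Diff_eq)
  also have "card ?K = n - 1"
    using assms by simp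
  finally have z: "card (?K \<inter> {k. c ! k = 0}) = n - 1 - punct_wt p c"
    using nz by simp
  show ?thesis
    by (simp add: prod.If_cases nz z)
qed

section \<open>The MacWilliams identity for Hermitian self-dual codes\<close>

locale self_dual_code =
  fixes n :: nat and D :: "f4 list set"
  assumes self_dual: "herm_self_dual n D"
begin

lemma code: "quaternary_code n D"
  using self_dual by (simp add: herm_self_dual_def)

lemma subset_vec_space: "D \<subseteq> vec_space n"
  using code by (simp add: quaternary_code_def)

lemma length_mem: "c \<in> D \<Longrightarrow> length c = n"
  using subset_vec_space by (auto simp: vec_space_def)

lemma zero_mem: "replicate n 0 \<in> D"
  using code by (simp add: quaternary_code_def)

lemma vscale_mem: "c \<in> D \<Longrightarrow> vscale s c \<in> D"
  using code by (simp add: quaternary_code_def)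

lemma finite_code: "finite D"
  using subset_vec_space finite_vec_space by (rule finite_subset)

lemma mem_iff_orthogonal: "u \<in> D \<longleftrightarrow> u \<in> vec_space n \<and> (\<forall>c\<in>D. herm_ip u c = 0)"
proof -
  have "D = herm_dual n D"
    using self_dual by (simp add: herm_self_dual_def)
  then have "u \<in> D \<longleftrightarrow> u \<in> herm_dual n D"
    by (rule arg_cong)
  then show ?thesis
    by (simp add: herm_dual_def)
qed

lemma sum_trace_char:
  "u \<in> vec_space n \<Longrightarrow> (\<Sum>c\<in>D. trace_char (herm_ip u c)) = (if u \<in> D then int (card D) else 0)"
  using sum_trace_char_herm_ip[OF code, of u] mem_iff_orthogonal[of u] by (simp add: vec_space_def)

lemma macwilliams_identity:
  fixes f :: "nat \<Rightarrow> f4 \<Rightarrow> 'a::comm_ring_1"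
  shows "of_nat (card D) * (\<Sum>u\<in>D. \<Prod>k<n. f k (u ! k)) =
           (\<Sum>c\<in>D. \<Prod>k<n. \<Sum>a\<in>UNIV. of_int (trace_char (a * (c ! k)^2)) * f k a)"
proof -
  let ?f = "\<lambda>u. \<Prod>k<n. f k (u ! k)"
  have "(\<Sum>c\<in>D. \<Prod>k<n. \<Sum>a\<in>UNIV. of_int (trace_char (a * (c ! k)^2)) * f k a)
      = (\<Sum>c\<in>D. \<Sum>u\<in>vec_space n. \<Prod>k<n. of_int (trace_char (u ! k * (c ! k)^2)) * f k (u ! k))"
    by (rule sum.cong[OF refl], rule sum_vec_space_prod[symmetric])
  also have "\<dots> = (\<Sum>c\<in>D. \<Sum>u\<in>vec_space n. of_int (trace_char (herm_ip u c)) * ?f u)"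
    by (intro sum.cong refl)
       (simp add: vec_space_def herm_ip_def trace_char_sum prod.distrib)
  also have "\<dots> = (\<Sum>u\<in>vec_space n. of_int (\<Sum>c\<in>D. trace_char (herm_ip u c)) * ?f u)"
    by (subst sum.swap) (simp add: sum_distrib_right)
  also have "\<dots> = (\<Sum>u\<in>vec_space n. if u \<in> D then of_nat (card D) * ?f u else 0)"
    by (rule sum.cong) (simp_all add: sum_trace_char)
  also have "\<dots> = of_nat (card D) * (\<Sum>u\<in>D. ?f u)"
    using subset_vec_space
    by (simp add: sum.If_cases finite_vec_space Int_absorb1 sum_distrib_left)
  finally show ?thesis ..
qed

lemma card_square: "card D ^ 2 = 4 ^ n"
proof -
  have "int (card D) * int (card D) = (\<Sum>c\<in>D. \<Prod>k<n. if c ! k = 0 then 4 else 0)"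
    using macwilliams_identity[where f = "\<lambda>_ _. 1 :: int"] by (simp add: sum_trace_char_f4)
  also have "\<dots> = (\<Sum>c\<in>D. if c = replicate n 0 then 4 ^ n else 0)"
  proof (rule sum.cong[OF refl])
    fix c assume "c \<in> D"
    then have "length c = n" by (rule length_mem)
    then show "(\<Prod>k<n. if c ! k = 0 then 4 else 0) = (if c = replicate n 0 then 4 ^ n else (0::int))"
      by (auto simp: list_eq_iff_nth_eq intro: prod_zero)
  qed
  also have "\<dots> = 4 ^ n"
    using finite_code zero_mem by simp
  finally have "int (card D ^ 2) = int (4 ^ n)"
    by (simp add: power2_eq_square)
  then show ?thesis
    by (simp only: of_nat_eq_iff)
qed

lemma even_wt: "c \<in> D \<Longrightarrow> even (wt c)"
  using mem_iff_orthogonal[of c] by (auto simp: herm_ip_self of_nat_f4 f4_consts split: if_splits)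

lemma punctured_macwilliams:
  fixes x :: "'a::comm_ring_1"
  assumes p: "p < n"
  shows "of_nat (card D) * (\<Sum>u\<in>D. x ^ punct_wt p u) =
     (\<Sum>c\<in>D. if c ! p = 0 then 4 * ((1 + 3 * x) ^ (n - 1 - punct_wt p c) * (1 - x) ^ punct_wt p c) else 0)"
proof -
  define f where "f k (a::f4) = (if k = p \<or> a = 0 then 1 else x)" for k a
  have split_p: "(\<Prod>k<n. g k) = g p * (\<Prod>k\<in>{..<n} - {p}. g k)" for g :: "nat \<Rightarrow> 'a"
    using p by (simp add: prod.remove)
  have "x ^ punct_wt p u = (\<Prod>k<n. f k (u ! k))" if "u \<in> D" for u
  proof -
    have "(\<Prod>k\<in>{..<n} - {p}. f k (u ! k)) = (\<Prod>k\<in>{..<n} - {p}. if u ! k = 0 then 1 else x)"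
      by (rule prod.cong) (auto simp: f_def)
    then show ?thesis
      using prod_punctured[OF length_mem[OF that] p, of 1 x] by (simp add: split_p f_def)
  qed
  moreover have "(\<Prod>k<n. \<Sum>a\<in>UNIV. of_int (trace_char (a * (c ! k)^2)) * f k a) =
      (if c ! p = 0 then 4 * ((1 + 3 * x) ^ (n - 1 - punct_wt p c) * (1 - x) ^ punct_wt p c) else 0)"
    if "c \<in> D" for c
  proof -
    have "(\<Prod>k\<in>{..<n} - {p}. \<Sum>a\<in>UNIV. of_int (trace_char (a * (c ! k)^2)) * f k a) =
        (\<Prod>k\<in>{..<n} - {p}. if c ! k = 0 then 1 + 3 * x else 1 - x)"
      by (rule prod.cong) (auto simp: f_def sum_trace_char_weighted)
    moreover have "(\<Sum>a\<in>UNIV. of_int (trace_char (a * (c ! p)^2)) * f p a) = (if c ! p = 0 then 4 else 0)"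
      by (simp add: f_def sum_trace_char_f4 flip: of_int_sum)
    ultimately show ?thesis
      using prod_punctured[OF length_mem[OF that] p, of "1 + 3 * x" "1 - x"]
      by (simp add: split_p f_def sum_trace_char_weighted)
  qed
  ultimately show ?thesis
    using macwilliams_identity[of f] by (simp cong: sum.cong)
qed

end

section \<open>Divisibility and translation-invariant polynomials\<close>

lemma order3_orbit_closed:
  assumes "g (g (g x)) = x" "g (g (g y)) = y" "g y \<in> {x, g x, g (g x)}"
  shows "y \<in> {x, g x, g (g x)}"
  using assms by (metis insert_iff singleton_iff)

lemma three_mult_dvd_sum_orbits:
  fixes F :: "'b \<Rightarrow> 'a::comm_semiring_1"
  assumes "finite S"
    and "\<And>x. x \<in> S \<Longrightarrow> g x \<in> S" "\<And>x. x \<in> S \<Longrightarrow> g (g (g x)) = x" "\<And>x. x \<in> S \<Longrightarrow> g x \<noteq> x"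
    and "\<And>x. x \<in> S \<Longrightarrow> F (g x) = F x" "\<And>x. x \<in> S \<Longrightarrow> d dvd F x"
  shows "3 * d dvd sum F S"
  using assms
proof (induction S rule: finite_psubset_induct)
  case (psubset S)
  show ?case
  proof (cases "S = {}")
    case True
    then show ?thesis by simp
  next
    case False
    then obtain x where x: "x \<in> S" by blast
    define orb where "orb = {x, g x, g (g x)}"
    have gx: "g x \<in> S" "g (g x) \<in> S"
      using psubset.prems(1) x by blast+
    have ne: "g x \<noteq> x" "g (g x) \<noteq> g x" "g (g x) \<noteq> x"
      using psubset.prems(2,3) x gx by metis+
    have orb_sub: "orb \<subseteq> S"
      using x gx by (simp add: orb_def)
    have closed: "g y \<in> S - orb" if "y \<in> S - orb" for y
      using order3_orbit_closed[of g x y] psubset.prems(1,2) x that by (auto simp: orb_def)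
    have rest: "3 * d dvd sum F (S - orb)"
    proof (rule psubset.IH)
      show "S - orb \<subset> S"
        using x by (auto simp: orb_def)
    qed (use closed psubset.hyps(1) psubset.prems(2-5) in simp_all)
    have "sum F orb = F x + (F x + F x)"
      using ne psubset.prems(4)[OF x] psubset.prems(4)[OF gx(1)] by (simp add: orb_def)
    also have "\<dots> = 3 * F x"
      by (simp only: numeral_Bit1 numeral_One distrib_right mult_1_left add.assoc)
    finally have "3 * d dvd sum F orb"
      using psubset.prems(5) x by (simp add: mult_dvd_mono)
    with rest show ?thesis
      by (simp add: sum.subset_diff[OF orb_sub psubset.hyps(1)] dvd_add)
  qed
qed

lemma three_mult_dvd_sum_omega_orbits:
  fixes F :: "f4 list \<Rightarrow> 'a::comm_semiring_1"
  assumes "finite S"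
    and "\<And>c. c \<in> S \<Longrightarrow> c \<noteq> replicate (length c) 0" "\<And>c. c \<in> S \<Longrightarrow> vscale omega c \<in> S"
    and "\<And>c. c \<in> S \<Longrightarrow> F (vscale omega c) = F c" "\<And>c. c \<in> S \<Longrightarrow> d dvd F c"
  shows "3 * d dvd sum F S"
  using assms by (intro three_mult_dvd_sum_orbits[where g = "vscale omega"])
    (simp_all add: vscale_omega_neq)

lemma nine_dvd_power_one_plus_three:
  "(9::'a::comm_ring_1) dvd (1 + 3 * x) ^ j - 1 - 3 * of_nat j * x"
proof (induction j)
  case 0
  then show ?case by simp
next
  case (Suc j)
  then obtain e where "(1 + 3 * x) ^ j = 1 + 3 * of_nat j * x + 9 * e"
    by (auto elim!: dvdE simp: algebra_simps)
  then have "(1 + 3 * x) ^ Suc j - 1 - 3 * of_nat (Suc j) * x = 9 * (e * (1 + 3 * x) + of_nat j * x * x)"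
    by (simp add: algebra_simps)
  then show ?case by simp
qed

lemma three_dvd_power_one_plus_three: "(3::'a::comm_ring_1) dvd (1 + 3 * x) ^ j - 1"
proof -
  obtain e where "(1 + 3 * x) ^ j - 1 - 3 * of_nat j * x = 9 * e"
    using nine_dvd_power_one_plus_three by blast
  then have "(1 + 3 * x) ^ j - 1 = 3 * (3 * e + of_nat j * x)"
    by (simp add: algebra_simps)
  then show ?thesis by (rule dvdI)
qed

lemma coeff_sum_X_power:
  "finite S \<Longrightarrow> coeff (\<Sum>c\<in>S. [:0, 1:] ^ f c) k = (of_nat (card {c \<in> S. f c = k}) :: 'a::comm_semiring_1)"
proof -
  have "[:0, 1:] ^ j = (monom 1 j :: 'a poly)" for j
    by (simp add: monom_altdef)
  then show "finite S \<Longrightarrow> ?thesis"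
    by (simp add: coeff_sum sum.inter_filter[symmetric])
qed

lemma coeff_eq_0_of_smult_eq_sum_X_power:
  fixes q :: "int poly"
  assumes "(\<Sum>c\<in>S. [:0, 1:] ^ f c) = smult d q" "d \<noteq> 0" "finite S" "\<And>c. c \<in> S \<Longrightarrow> f c \<noteq> k"
  shows "coeff q k = 0"
proof -
  have "d * coeff q k = int (card {c \<in> S. f c = k})"
    using arg_cong[OF assms(1), of "\<lambda>p. coeff p k"] coeff_sum_X_power[OF assms(3), of f k, where 'a = int]
    by simp
  moreover have "{c \<in> S. f c = k} = {}"
    using assms(4) by auto
  ultimately show ?thesis
    using assms(2) by simp
qed

lemma pcompose_neg_X_even:
  assumes "\<And>k. odd k \<Longrightarrow> coeff p k = 0"
  shows "p \<circ>\<^sub>p [:0, -1:] = (p :: 'a::comm_ring_1 poly)"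
proof (rule poly_eqI)
  fix k
  show "coeff (p \<circ>\<^sub>p [:0, -1:]) k = coeff p k"
    by (cases "even k") (simp_all add: coeff_pcompose_linear assms)
qed

lemma pcompose_neg_X_odd:
  assumes "\<And>k. even k \<Longrightarrow> coeff p k = 0"
  shows "p \<circ>\<^sub>p [:0, -1:] = - (p :: 'a::comm_ring_1 poly)"
proof (rule poly_eqI)
  fix k
  show "coeff (p \<circ>\<^sub>p [:0, -1:]) k = coeff (- p) k"
    by (cases "even k") (simp_all add: coeff_pcompose_linear assms)
qed

lemma of_int_poly_eq_0_iff:
  "of_int_poly p = (0 :: 'a::comm_ring_1 poly) \<longleftrightarrow> (\<forall>k. int CHAR('a) dvd coeff p k)"
  by (simp add: poly_eq_iff of_int_eq_0_iff_char_dvd)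

lemma sum_count_le_size: "finite A \<Longrightarrow> sum (count M) A \<le> size M"
proof -
  assume "finite A"
  then have "sum (count M) A = sum (count M) (A \<inter> set_mset M)"
    by (intro sum.mono_neutral_right) (auto simp: count_eq_zero_iff)
  also have "\<dots> \<le> sum (count M) (set_mset M)"
    by (rule sum_mono2) auto
  finally show ?thesis
    by (simp add: size_multiset_overloaded_eq)
qed

(* The hypotheses are the punctured MacWilliams identity (with W0 = 3 r and W1 = 3 s), the
   expansions modulo 9 of c = |D|, of b = (1 + 3x)^n and of the zero-head sum t, and a property
   of n = 6m - 1. *)
lemma three_dvd_of_macwilliams_mod_nine:
  fixes r s x y b c t n n' e1 e2 l :: "int poly"
  assumes "c * (1 + 3 * r + 3 * s) = 4 * b + 4 * t"
    and "c - 1 = 9 * l" "b - 1 - 3 * n * x = 9 * e2" "t - 3 * y = 9 * e1" "1 + 4 * n = 3 * n'"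
  shows "3 dvd r + s - (1 - x + y)"
proof -
  let ?z = "4 * e2 + 4 * e1 - l * (1 + 3 * r + 3 * s) + n' * x + y"
  have "3 * (r + s - (1 - x + y)) - 3 * (3 * ?z) =
      c * (1 + 3 * r + 3 * s) - (4 * b + 4 * t) - (c - 1 - 9 * l) * (1 + 3 * r + 3 * s) +
      4 * (b - 1 - 3 * n * x - 9 * e2) + 4 * (t - 3 * y - 9 * e1) + 3 * x * (1 + 4 * n - 3 * n')"
    by (simp add: algebra_simps)
  then have "3 * (r + s - (1 - x + y)) = 3 * (3 * ?z)"
    using assms by simp
  then have "r + s - (1 - x + y) = 3 * ?z"
    by (rule iffD1[OF mult_left_cancel, rotated]) simp
  then show ?thesis
    by (rule dvdI)
qed

(* Translating by 1 moves the root 0 of multiplicity k to the CHAR('a) distinct roots -j. *)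
lemma CHAR_mult_le_degree:
  fixes p :: "'a::idom poly"
  assumes inv: "p \<circ>\<^sub>p [:1, 1:] = p" and dvd: "[:0, 1:] ^ k dvd p" and "p \<noteq> 0"
  shows "CHAR('a) * k \<le> degree p"
proof -
  have shift: "p \<circ>\<^sub>p [:of_nat j, 1:] = p" for j
  proof (induction j)
    case 0
    then show ?case by (simp add: pcompose_idR)
  next
    case (Suc j)
    have "p \<circ>\<^sub>p [:of_nat (Suc j), 1:] = p \<circ>\<^sub>p ([:1, 1:] \<circ>\<^sub>p [:of_nat j, 1:])"
      by (simp add: pcompose_pCons)
    also have "\<dots> = p"
      by (simp only: pcompose_assoc inv Suc.IH)
    finally show ?case .
  qed
  have order: "k \<le> order (- of_nat j) p" for j
  proof -
    obtain q where "p = [:0, 1:] ^ k * q"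
      using dvd by (elim dvdE)
    then have "p = [:- (- of_nat j), 1:] ^ k * (q \<circ>\<^sub>p [:of_nat j, 1:])"
      using shift[of j] by (simp add: pcompose_mult pcompose_hom.hom_power pcompose_pCons)
    then show ?thesis
      using \<open>p \<noteq> 0\<close> order_divides by (metis dvd_triv_left)
  qed
  have of_nat_neq: "(of_nat i :: 'a) \<noteq> of_nat j" if "i < j" "j < CHAR('a)" for i j
  proof
    assume "(of_nat i :: 'a) = of_nat j"
    then have "CHAR('a) dvd j - i"
      using of_nat_eq_iff_char_dvd[OF \<open>i < j\<close>, where 'a = 'a] by simp
    then show False
      using that by (auto dest: dvd_imp_le)
  qed
  have inj: "inj_on (\<lambda>j. - of_nat j :: 'a) {..<CHAR('a)}"
    by (rule inj_onI) (metis lessThan_iff linorder_neqE_nat neg_equal_iff_equal of_nat_neq)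
  have "CHAR('a) * k = (\<Sum>j<CHAR('a). k)"
    by simp
  also have "\<dots> \<le> (\<Sum>j<CHAR('a). order (- of_nat j) p)"
    by (rule sum_mono) (rule order)
  also have "\<dots> = (\<Sum>a\<in>(\<lambda>j. - of_nat j) ` {..<CHAR('a)}. count (proots p) a)"
    using \<open>p \<noteq> 0\<close> by (simp add: sum.reindex[OF inj])
  also have "\<dots> \<le> size (proots p)"
    by (rule sum_count_le_size) simp
  also have "\<dots> \<le> degree p"
    by (rule size_proots_le)
  finally show ?thesis .
qed

lemma translation_invariant_of_weight_identity:
  fixes r s :: "'a::comm_ring_1 poly"
  assumes E: "r + s = 1 - [:0, 1:] + r \<circ>\<^sub>p [:1, -1:]"
    and r_even: "r \<circ>\<^sub>p [:0, -1:] = r" and s_odd: "s \<circ>\<^sub>p [:0, -1:] = - s"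
  shows "(r + [:0, 1:] * s) \<circ>\<^sub>p [:1, 1:] = r + [:0, 1:] * s"
proof -
  let ?X = "[:0, 1:] :: 'a poly"
  let ?r1 = "r \<circ>\<^sub>p [:1, 1:]"
  have "(r + s) \<circ>\<^sub>p [:0, -1:] = (1 - ?X + r \<circ>\<^sub>p [:1, -1:]) \<circ>\<^sub>p [:0, -1:]"
    using E by simp
  then have "r - s = 1 + ?X + ?r1"
    using r_even s_odd
    by (simp add: pcompose_add pcompose_diff pcompose_assoc[symmetric] pcompose_pCons pcompose_1)
  then have s_eq: "s = r - 1 - ?X - ?r1"
    by (simp add: algebra_simps)
  have r_shift: "(r \<circ>\<^sub>p [:1, -1:]) \<circ>\<^sub>p [:1, 1:] = r"
    using r_even by (simp add: pcompose_assoc[symmetric] pcompose_pCons pcompose_1)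
  have "s = 1 - ?X + r \<circ>\<^sub>p [:1, -1:] - r"
    using E by (simp add: algebra_simps)
  then have "s \<circ>\<^sub>p [:1, 1:] = (1 - ?X + r \<circ>\<^sub>p [:1, -1:] - r) \<circ>\<^sub>p [:1, 1:]"
    by simp
  also have "\<dots> = - ?X + r - ?r1"
    by (simp add: pcompose_add pcompose_diff r_shift pcompose_pCons pcompose_1 one_pCons)
  finally have s_shift: "s \<circ>\<^sub>p [:1, 1:] = - ?X + r - ?r1" .
  have "(r + ?X * s) \<circ>\<^sub>p [:1, 1:] = ?r1 + [:1, 1:] * (- ?X + r - ?r1)"
    by (simp add: pcompose_add pcompose_mult s_shift pcompose_pCons pcompose_1)
  also have "\<dots> = r + ?X * s"
    unfolding s_eq by (simp add: algebra_simps)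
  finally show ?thesis .
qed

lemma weight_identity_solution_eq_0:
  fixes r s :: "'a::idom poly"
  assumes char: "CHAR('a) = 3"
    and E: "r + s = 1 - [:0, 1:] + r \<circ>\<^sub>p [:1, -1:]"
    and r_even: "r \<circ>\<^sub>p [:0, -1:] = r" and s_odd: "s \<circ>\<^sub>p [:0, -1:] = - s"
    and deg: "degree r + 2 \<le> 6 * m"
    and dvd: "[:0, 1:] ^ (2 * m) dvd r + [:0, 1:] * s"
  shows "r + [:0, 1:] * s = 0"
proof (rule ccontr)
  let ?p = "r + [:0, 1:] * s"
  assume "?p \<noteq> 0"
  have "?p \<circ>\<^sub>p [:1, 1:] = ?p"
    using E r_even s_odd by (rule translation_invariant_of_weight_identity)
  from CHAR_mult_le_degree[OF this dvd \<open>?p \<noteq> 0\<close>] char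
  have "6 * m \<le> degree ?p" by simp
  moreover have "degree ?p < 6 * m"
  proof -
    have s_eq: "s = 1 - [:0, 1:] + r \<circ>\<^sub>p [:1, -1:] - r"
      using E by (simp add: algebra_simps)
    have "degree s \<le> max 1 (degree r)"
      unfolding s_eq by (intro degree_diff_le degree_add_le) (simp_all add: degree_pcompose)
    then have "degree s + 1 < 6 * m"
      using deg by (simp add: max_def split: if_splits) presburger
    then have "degree ([:0, 1:] * s) < 6 * m"
      using degree_mult_le[of "[:0, 1:]" s] by simp
    then show ?thesis
      using deg degree_add_le_max[of r "[:0, 1:] * s"] by auto
  qed
  ultimately show False by simp
qed

typedef three = "{0..<3::nat}"
  by (rule exI[of _ 0]) simp

instance three :: finite
  by standard (simp add: type_definition.univ[OF type_definition_three])

lemma CARD_three: "CARD(three) = 3"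
  by (simp add: type_definition.card[OF type_definition_three])

instance three :: prime_card
  by standard (simp add: CARD_three)

type_synonym f3 = "three mod_ring"

lemma CHAR_f3: "CHAR(f3) = 3"
  by (simp add: CARD_three)

section \<open>Weight enumerators of self-dual codes of length 6m\<close>

context self_dual_code
begin

definition zero_head :: "f4 list set" where
  "zero_head = {c \<in> D. c \<noteq> replicate n 0 \<and> c ! 0 = 0}"

definition nonzero_head :: "f4 list set" where
  "nonzero_head = {c \<in> D. c ! 0 \<noteq> 0}"

definition zero_head_enum :: "int poly" where
  "zero_head_enum = (\<Sum>c\<in>zero_head. [:0, 1:] ^ punct_wt 0 c)"

definition nonzero_head_enum :: "int poly" where
  "nonzero_head_enum = (\<Sum>c\<in>nonzero_head. [:0, 1:] ^ punct_wt 0 c)"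

end

locale self_dual_code_6m = self_dual_code "6 * m" D for m :: nat and D :: "f4 list set" +
  assumes m_pos: "0 < m"
begin

lemma length_pos: "c \<in> D \<Longrightarrow> 0 < length c"
  using length_mem m_pos by simp

lemma nonzero_code_eq: "D - {replicate (6 * m) 0} = zero_head \<union> nonzero_head"
  using m_pos by (auto simp: zero_head_def nonzero_head_def)

lemma finite_heads: "finite zero_head" "finite nonzero_head"
  using finite_code by (simp_all add: zero_head_def nonzero_head_def)

lemma heads_disjoint: "zero_head \<inter> nonzero_head = {}"
  by (auto simp: zero_head_def nonzero_head_def)

lemma omega_orbits_heads:
  assumes "c \<in> zero_head \<or> c \<in> nonzero_head"
  shows "c \<noteq> replicate (length c) 0" "vscale omega c \<in> zero_head \<longleftrightarrow> c \<in> zero_head"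
    "vscale omega c \<in> nonzero_head \<longleftrightarrow> c \<in> nonzero_head"
    "punct_wt 0 (vscale omega c) = punct_wt 0 c"
proof -
  have c: "c \<in> D" "length c = 6 * m" "c \<noteq> replicate (6 * m) 0"
    using assms nonzero_code_eq length_mem by auto
  have "omega \<noteq> 0"
    by (simp add: f4_consts)
  then show "c \<noteq> replicate (length c) 0" "vscale omega c \<in> zero_head \<longleftrightarrow> c \<in> zero_head"
    "vscale omega c \<in> nonzero_head \<longleftrightarrow> c \<in> nonzero_head"
    "punct_wt 0 (vscale omega c) = punct_wt 0 c"
    using c m_pos vscale_eq_replicate_0_iff[of omega c] vscale_mem[of c omega]
    by (auto simp: zero_head_def nonzero_head_def punct_wt_vscale)
qed

lemma wt_heads:
  "c \<in> zero_head \<Longrightarrow> wt c = punct_wt 0 c" "c \<in> nonzero_head \<Longrightarrow> wt c = punct_wt 0 c + 1"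
  using wt_eq_punct_wt[of 0 c] length_mem[of c] m_pos by (auto simp: zero_head_def nonzero_head_def)

lemma parity_heads:
  "c \<in> zero_head \<Longrightarrow> even (punct_wt 0 c)" "c \<in> nonzero_head \<Longrightarrow> odd (punct_wt 0 c)"
  using even_wt[of c] wt_heads[of c] by (auto simp: zero_head_def nonzero_head_def)

lemma sum_wt_split:
  fixes x :: "'a::comm_semiring_1"
  shows "(\<Sum>c\<in>D - {replicate (6 * m) 0}. x ^ wt c) =
     (\<Sum>c\<in>zero_head. x ^ punct_wt 0 c) + x * (\<Sum>c\<in>nonzero_head. x ^ punct_wt 0 c)"
proof -
  have "(\<Sum>c\<in>D - {replicate (6 * m) 0}. x ^ wt c) =
      (\<Sum>c\<in>zero_head. x ^ wt c) + (\<Sum>c\<in>nonzero_head. x ^ wt c)"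
    unfolding nonzero_code_eq using finite_heads heads_disjoint by (rule sum.union_disjoint)
  also have "\<dots> = (\<Sum>c\<in>zero_head. x ^ punct_wt 0 c) + (\<Sum>c\<in>nonzero_head. x * x ^ punct_wt 0 c)"
    by (simp add: wt_heads cong: sum.cong)
  finally show ?thesis
    by (simp add: sum_distrib_left)
qed

lemma punctured_macwilliams_split:
  fixes x :: "'a::comm_ring_1"
  shows "of_nat (card D) *
      (1 + (\<Sum>c\<in>zero_head. x ^ punct_wt 0 c) + (\<Sum>c\<in>nonzero_head. x ^ punct_wt 0 c)) =
    4 * (1 + 3 * x) ^ (6 * m - 1) +
      4 * (\<Sum>c\<in>zero_head. (1 + 3 * x) ^ (6 * m - 1 - punct_wt 0 c) * (1 - x) ^ punct_wt 0 c)"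
proof -
  let ?z = "replicate (6 * m) (0::f4)"
  let ?F = "\<lambda>c. 4 * ((1 + 3 * x) ^ (6 * m - 1 - punct_wt 0 c) * (1 - x) ^ punct_wt 0 c)"
  have split: "(\<Sum>c\<in>D. g c) = g ?z + (\<Sum>c\<in>zero_head. g c) + (\<Sum>c\<in>nonzero_head. g c)"
    for g :: "f4 list \<Rightarrow> 'a"
    using sum.remove[OF finite_code zero_mem, of g] finite_heads heads_disjoint
    by (simp add: nonzero_code_eq sum.union_disjoint add.assoc)
  have pw_z: "punct_wt 0 ?z = 0"
    by (simp add: punct_wt_def)
  have "(\<Sum>c\<in>zero_head. if c ! 0 = 0 then ?F c else 0) = (\<Sum>c\<in>zero_head. ?F c)"
    by (rule sum.cong) (auto simp: zero_head_def)
  moreover have "(\<Sum>c\<in>nonzero_head. if c ! 0 = 0 then ?F c else 0) = 0"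
    by (rule sum.neutral) (auto simp: nonzero_head_def)
  ultimately show ?thesis
    using punctured_macwilliams[of 0 x] m_pos
    by (simp add: split pw_z sum_distrib_left)
qed

lemma card_code: "card D = 64 ^ m"
proof -
  have "(64::nat) ^ m = 4 ^ (3 * m)"
    by (simp add: power_mult)
  then have "card D ^ 2 = (64 ^ m) ^ 2"
    using card_square by (simp add: power_mult[symmetric] mult.commute)
  then show ?thesis
    by simp
qed

lemma nine_dvd_card_minus_1: "(9::int) dvd int (card D) - 1"
proof -
  have "int (card D) - 1 = 9 * (7 * (\<Sum>i<m. 64 ^ i))"
    using power_diff_1_eq[of "64::int" m] by (simp add: card_code)
  then show ?thesis
    by (rule dvdI)
qed

lemma three_mult_dvd_sum_heads:
  fixes F :: "nat \<Rightarrow> 'a::comm_semiring_1"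
  assumes "S = zero_head \<or> S = nonzero_head" and "\<And>j. d dvd F j"
  shows "3 * d dvd (\<Sum>c\<in>S. F (punct_wt 0 c))"
  using assms omega_orbits_heads finite_heads by (intro three_mult_dvd_sum_omega_orbits) auto

lemma zero_head_sum_mod_nine:
  "9 dvd (\<Sum>c\<in>zero_head. (1 + 3 * [:0, 1:]) ^ (6 * m - 1 - punct_wt 0 c) * (1 - [:0, 1:]) ^ punct_wt 0 c) -
     zero_head_enum \<circ>\<^sub>p [:1, -1:]"
proof -
  let ?X = "[:0, 1:] :: int poly"
  have "zero_head_enum \<circ>\<^sub>p [:1, -1:] = (\<Sum>c\<in>zero_head. (1 - ?X) ^ punct_wt 0 c)"
    by (simp add: zero_head_enum_def pcompose_sum pcompose_hom.hom_power pcompose_pCons one_pCons)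
  then have "(\<Sum>c\<in>zero_head. (1 + 3 * ?X) ^ (6 * m - 1 - punct_wt 0 c) * (1 - ?X) ^ punct_wt 0 c) -
      zero_head_enum \<circ>\<^sub>p [:1, -1:] =
      (\<Sum>c\<in>zero_head. ((1 + 3 * ?X) ^ (6 * m - 1 - punct_wt 0 c) - 1) * (1 - ?X) ^ punct_wt 0 c)"
    by (simp only: sum_subtractf[symmetric] left_diff_distrib mult_1_left)
  also have "3 * 3 dvd \<dots>"
  proof (rule three_mult_dvd_sum_heads[where F = "\<lambda>j. ((1 + 3 * ?X) ^ (6 * m - 1 - j) - 1) * (1 - ?X) ^ j"])
    show "3 dvd ((1 + 3 * ?X) ^ (6 * m - 1 - j) - 1) * (1 - ?X) ^ j" for j
      by (rule dvd_mult2, rule three_dvd_power_one_plus_three)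
  qed simp
  finally show ?thesis
    by simp
qed

lemma congruence_mod_three:
  obtains r s where "zero_head_enum = smult 3 r" "nonzero_head_enum = smult 3 s"
    "3 dvd r + s - (1 - [:0, 1:] + r \<circ>\<^sub>p [:1, -1:])"
proof -
  let ?X = "[:0, 1:] :: int poly"
  let ?T = "\<Sum>c\<in>zero_head. (1 + 3 * ?X) ^ (6 * m - 1 - punct_wt 0 c) * (1 - ?X) ^ punct_wt 0 c"
  obtain r where r: "zero_head_enum = 3 * r"
    using three_mult_dvd_sum_heads[of zero_head 1 "\<lambda>j. ?X ^ j"] unfolding zero_head_enum_def
    by (auto elim: dvdE)
  obtain s where s: "nonzero_head_enum = 3 * s"
    using three_mult_dvd_sum_heads[of nonzero_head 1 "\<lambda>j. ?X ^ j"] unfolding nonzero_head_enum_def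
    by (auto elim: dvdE)
  obtain e1 where e1: "?T - 3 * r \<circ>\<^sub>p [:1, -1:] = 9 * e1"
    using zero_head_sum_mod_nine unfolding r pcompose_hom.hom_mult pcompose_hom.hom_numeral
    by (elim dvdE)
  obtain e2 where e2: "(1 + 3 * ?X) ^ (6 * m - 1) - 1 - 3 * of_nat (6 * m - 1) * ?X = 9 * e2"
    using nine_dvd_power_one_plus_three[of ?X "6 * m - 1"] by (elim dvdE)
  obtain l where "int (card D) - 1 = 9 * l"
    using nine_dvd_card_minus_1 by (elim dvdE)
  then have "(of_int (int (card D) - 1) :: int poly) = of_int (9 * l)"
    by simp
  then have l: "of_nat (card D) - 1 = (9 * of_int l :: int poly)"
    by simp
  have "1 + 4 * (6 * m - 1) = 3 * (8 * m - 1)"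
    using m_pos by simp
  then have n: "1 + 4 * of_nat (6 * m - 1) = (3 * of_nat (8 * m - 1) :: int poly)"
    by (metis of_nat_1 of_nat_add of_nat_mult of_nat_numeral)
  have "3 dvd r + s - (1 - ?X + r \<circ>\<^sub>p [:1, -1:])"
    using punctured_macwilliams_split[of ?X, folded zero_head_enum_def nonzero_head_enum_def, unfolded r s]
      l e2 e1 n
    by (rule three_dvd_of_macwilliams_mod_nine)
  moreover have "3 * r = smult 3 r" "3 * s = smult 3 s"
    by (simp_all add: numeral_poly)
  ultimately show thesis
    using that r s by metis
qed

lemma nonzero_weight_enum:
  assumes "zero_head_enum = smult 3 r" and "nonzero_head_enum = smult 3 s"
  shows "(\<Sum>c\<in>D - {replicate (6 * m) 0}. [:0, 1:] ^ wt c) = smult 3 (r + [:0, 1:] * s)"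
  using sum_wt_split[of "[:0, 1:] :: int poly"] assms
  by (simp add: zero_head_enum_def nonzero_head_enum_def smult_add_right mult_smult_right)

lemma pcompose_neg_X_reduced_enums:
  assumes r: "zero_head_enum = smult 3 r" and s: "nonzero_head_enum = smult 3 s"
  shows "(of_int_poly r :: 'a::comm_ring_1 poly) \<circ>\<^sub>p [:0, -1:] = of_int_poly r"
    and "(of_int_poly s :: 'a poly) \<circ>\<^sub>p [:0, -1:] = - of_int_poly s"
proof -
  have "coeff r k = 0" if "odd k" for k
    by (rule coeff_eq_0_of_smult_eq_sum_X_power[OF r[unfolded zero_head_enum_def]])
       (use finite_heads parity_heads that in fastforce)+
  then show "(of_int_poly r :: 'a poly) \<circ>\<^sub>p [:0, -1:] = of_int_poly r"
    by (intro pcompose_neg_X_even) simp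
  have "coeff s k = 0" if "even k" for k
    by (rule coeff_eq_0_of_smult_eq_sum_X_power[OF s[unfolded nonzero_head_enum_def]])
       (use finite_heads parity_heads that in fastforce)+
  then show "(of_int_poly s :: 'a poly) \<circ>\<^sub>p [:0, -1:] = - of_int_poly s"
    by (intro pcompose_neg_X_odd) simp
qed

lemma degree_zero_head_quotient:
  assumes "zero_head_enum = smult 3 r"
  shows "degree r + 2 \<le> 6 * m"
proof -
  have "degree r \<le> 6 * m - 2"
  proof (rule degree_le, intro allI impI coeff_eq_0_of_smult_eq_sum_X_power[OF assms[unfolded zero_head_enum_def]])
    fix i c assume "6 * m - 2 < i" "c \<in> zero_head"
    moreover have "c \<in> D"
      using \<open>c \<in> zero_head\<close> by (simp add: zero_head_def)
    then have "punct_wt 0 c \<le> 6 * m - 1"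
      using punct_wt_le[of 0 c] length_pos[of c] length_mem[of c] by simp
    ultimately show "punct_wt 0 c \<noteq> i"
      using parity_heads(1)[of c] m_pos by presburger
  qed (simp_all add: finite_heads)
  then show ?thesis
    using m_pos by linarith
qed

lemma three_dvd_coeff_reduced:
  assumes r: "zero_head_enum = smult 3 r" and s: "nonzero_head_enum = smult 3 s"
    and cong: "3 dvd r + s - (1 - [:0, 1:] + r \<circ>\<^sub>p [:1, -1:])"
    and min_wt: "\<And>c. c \<in> D - {replicate (6 * m) 0} \<Longrightarrow> 2 * m \<le> wt c"
  shows "3 dvd coeff (r + [:0, 1:] * s) k"
proof -
  let ?\<phi> = "of_int_poly :: int poly \<Rightarrow> f3 poly"
  have "?\<phi> (r + s - (1 - [:0, 1:] + r \<circ>\<^sub>p [:1, -1:])) = 0"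
    using cong unfolding numeral_poly const_poly_dvd_iff by (simp add: of_int_poly_eq_0_iff CARD_three)
  then have E: "?\<phi> r + ?\<phi> s = 1 - [:0, 1:] + ?\<phi> r \<circ>\<^sub>p [:1, -1:]"
    by (simp add: hom_distribs)
  have deg: "degree (?\<phi> r) + 2 \<le> 6 * m"
    using degree_map_poly_le[of "of_int :: int \<Rightarrow> f3" r] degree_zero_head_quotient[OF r] by linarith
  have "coeff (r + [:0, 1:] * s) k = 0" if "k < 2 * m" for k
    by (rule coeff_eq_0_of_smult_eq_sum_X_power[OF nonzero_weight_enum[OF r s]])
       (use finite_code min_wt that in force)+
  moreover have "[:0, 1:] ^ (2 * m) = (monom 1 (2 * m) :: f3 poly)"
    by (simp add: monom_altdef)
  ultimately have "[:0, 1:] ^ (2 * m) dvd ?\<phi> (r + [:0, 1:] * s)"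
    by (simp only: monom_1_dvd_iff') simp
  then have "[:0, 1:] ^ (2 * m) dvd ?\<phi> r + [:0, 1:] * ?\<phi> s"
    by (simp add: hom_distribs)
  with CHAR_f3 E pcompose_neg_X_reduced_enums[OF r s] deg
  have "?\<phi> r + [:0, 1:] * ?\<phi> s = 0"
    by (rule weight_identity_solution_eq_0)
  then have "?\<phi> (r + [:0, 1:] * s) = 0"
    by (simp add: hom_distribs)
  then show ?thesis
    by (simp add: of_int_poly_eq_0_iff CARD_three)
qed

lemma nine_dvd_card_wt:
  assumes min_wt: "\<And>c. c \<in> D - {replicate (6 * m) 0} \<Longrightarrow> 2 * m \<le> wt c"
  shows "9 dvd card {c \<in> D - {replicate (6 * m) 0}. wt c = w}"
proof -
  obtain r s where r: "zero_head_enum = smult 3 r" and s: "nonzero_head_enum = smult 3 s"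
    and cong: "3 dvd r + s - (1 - [:0, 1:] + r \<circ>\<^sub>p [:1, -1:])"
    by (rule congruence_mod_three)
  have "int (card {c \<in> D - {replicate (6 * m) 0}. wt c = w}) = 3 * coeff (r + [:0, 1:] * s) w"
    using arg_cong[OF nonzero_weight_enum[OF r s], of "\<lambda>p. coeff p w"]
      coeff_sum_X_power[of "D - {replicate (6 * m) 0}" wt w, where 'a = int] finite_code
    by simp
  moreover have "3 dvd coeff (r + [:0, 1:] * s) w"
    using r s cong min_wt by (rule three_dvd_coeff_reduced)
  then obtain t where "coeff (r + [:0, 1:] * s) w = 3 * t"
    by (elim dvdE)
  ultimately have "int (card {c \<in> D - {replicate (6 * m) 0}. wt c = w}) = int 9 * t"
    by simp
  then show ?thesis
    by (simp only: int_dvd_int_iff[symmetric] dvdI)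
qed

end

theorem theorem3p5:
  fixes m :: nat and D :: "f4 list set"
  assumes "m > 0"
    and "near_extremal (6 * m) D"
  shows "\<forall>i\<in>{m..3 * m}. (9::nat) dvd A_count D (2 * i)"
proof
  fix i assume i: "i \<in> {m..3 * m}"
  have sd: "herm_self_dual (6 * m) D" and mw: "min_weight (6 * m) D = 2 * m"
    using assms(2) by (simp_all add: near_extremal_def)
  interpret self_dual_code_6m m D
    by unfold_locales (use sd assms(1) in simp_all)
  have "2 * m \<le> wt c" if "c \<in> D - {replicate (6 * m) 0}" for c
  proof -
    have "Min {wt x | x. x \<in> D \<and> x \<noteq> replicate (6 * m) 0} \<le> wt c"
      by (rule Min_le) (use finite_code that in auto)
    then show ?thesis
      using mw by (simp add: min_weight_def)
  qed
  then have "9 dvd card {c \<in> D - {replicate (6 * m) 0}. wt c = 2 * i}"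
    by (rule nine_dvd_card_wt)
  moreover have "{c \<in> D - {replicate (6 * m) 0}. wt c = 2 * i} = {c \<in> D. wt c = 2 * i}"
    using i assms(1) by (auto simp: wt_def cong: conj_cong)
  ultimately show "9 dvd A_count D (2 * i)"
    by (simp add: A_count_def)
qed

end
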